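(* Let $S$ be a nonempty complete lattice and let $F:S\to 2^S$ be a V-ascending correspondence. Suppose that for every $x\in S$, the value $F(x)$, with the order induced from $S$, is a nonempty complete lattice. Then $\mathrm{Fix}(F)=\{s\in S: s\in F(s)\}$, with the order induced from $S$, is a nonempty complete lattice.
   Context: A poset $P$ is a complete lattice if every nonempty subset of $P$ has a supremum and an infimum in $P$ (this is an intrinsic property of $P$; for $F(x)$ the suprema/infima are taken within $F(x)$, not necessarily agreeing with those in $S$). For a lattice $S$ and a correspondence $F:S\to 2^S$: $F$ is lower V-ascending if for all $x<x'$ in $S$ (strict inequality), every $y\in F(x)$ and every $y'\in F(x')$, one has $y\wedge y'\in F(x)$; $F$ is upper V-ascending if under the same conditions $y\vee y'\in F(x')$; $F$ is V-ascending if it is both upper and lower V-ascending. *)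

theory Defs
  imports Main
begin

definition is_sup_in :: "'a::order set \<Rightarrow> 'a set \<Rightarrow> 'a \<Rightarrow> bool" where
  "is_sup_in P A s \<longleftrightarrow> s \<in> P \<and> (\<forall>a\<in>A. a \<le> s) \<and> (\<forall>u\<in>P. (\<forall>a\<in>A. a \<le> u) \<longrightarrow> s \<le> u)"

definition is_inf_in :: "'a::order set \<Rightarrow> 'a set \<Rightarrow> 'a \<Rightarrow> bool" where
  "is_inf_in P A s \<longleftrightarrow> s \<in> P \<and> (\<forall>a\<in>A. s \<le> a) \<and> (\<forall>u\<in>P. (\<forall>a\<in>A. u \<le> a) \<longrightarrow> u \<le> s)"

definition complete_sublattice_order :: "'a::order set \<Rightarrow> bool" where
  "complete_sublattice_order P \<longleftrightarrow>
     (\<forall>A. A \<subseteq> P \<and> A \<noteq> {} \<longrightarrow> (\<exists>s. is_sup_in P A s) \<and> (\<exists>i. is_inf_in P A i))"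

definition lower_V_ascending :: "('a::lattice \<Rightarrow> 'a set) \<Rightarrow> bool" where
  "lower_V_ascending F \<longleftrightarrow>
     (\<forall>x x' y y'. x < x' \<longrightarrow> y \<in> F x \<longrightarrow> y' \<in> F x' \<longrightarrow> inf y y' \<in> F x)"

definition upper_V_ascending :: "('a::lattice \<Rightarrow> 'a set) \<Rightarrow> bool" where
  "upper_V_ascending F \<longleftrightarrow>
     (\<forall>x x' y y'. x < x' \<longrightarrow> y \<in> F x \<longrightarrow> y' \<in> F x' \<longrightarrow> sup y y' \<in> F x')"

definition V_ascending :: "('a::lattice \<Rightarrow> 'a set) \<Rightarrow> bool" where
  "V_ascending F \<longleftrightarrow> lower_V_ascending F \<and> upper_V_ascending F"

definition Fix :: "('a \<Rightarrow> 'a set) \<Rightarrow> 'a set" where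
  "Fix F = {s. s \<in> F s}"

end

theory Submission
  imports Defs "HOL-Library.Dual_Ordered_Lattice"
begin

text \<open>Let \<open>A \<subseteq> Fix F\<close> have supremum \<open>a\<close> in \<open>S\<close>. Upper V-ascendingness forces every
value \<open>F x\<close> with \<open>a \<le> x\<close> to have a least element \<open>k x\<close> above \<open>a\<close>, and lower
V-ascendingness makes \<open>k\<close> monotone on \<open>[a, \<top>]\<close>. The least fixed point of \<open>k\<close>
(Knaster-Tarski) lies in \<open>Fix F\<close> and is below every fixed point of \<open>F\<close> bounding \<open>A\<close>,
so it is the supremum of \<open>A\<close> in \<open>Fix F\<close>. Infima follow by order duality, and
nonemptiness is the case \<open>A = {}\<close>.\<close>

lemma is_sup_inD:
  assumes "is_sup_in P A s"
  shows "s \<in> P" "a \<in> A \<Longrightarrow> a \<le> s" "u \<in> P \<Longrightarrow> (\<And>a. a \<in> A \<Longrightarrow> a \<le> u) \<Longrightarrow> s \<le> u"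
  using assms unfolding is_sup_in_def by blast+

lemma is_inf_inD:
  assumes "is_inf_in P A s"
  shows "s \<in> P" "a \<in> A \<Longrightarrow> s \<le> a" "u \<in> P \<Longrightarrow> (\<And>a. a \<in> A \<Longrightarrow> u \<le> a) \<Longrightarrow> u \<le> s"
  using assms unfolding is_inf_in_def by blast+

lemma complete_sublattice_orderE:
  assumes "complete_sublattice_order P" "A \<subseteq> P" "A \<noteq> {}"
  obtains s i where "is_sup_in P A s" "is_inf_in P A i"
  using assms unfolding complete_sublattice_order_def by blast

lemma least_fixpoint_above:
  fixes k :: "'a::order \<Rightarrow> 'a"
  assumes complete: "complete_sublattice_order (UNIV :: 'a set)"
    and mono: "mono_on {a..} k" and above: "\<And>x. a \<le> x \<Longrightarrow> a \<le> k x"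
  obtains p where "a \<le> p" "k p = p" "\<And>u. a \<le> u \<Longrightarrow> k u \<le> u \<Longrightarrow> p \<le> u"
proof -
  define D where "D = {x. a \<le> x \<and> k x \<le> x}"
  obtain T where T: "is_sup_in UNIV (UNIV :: 'a set) T"
    using complete_sublattice_orderE[OF complete order_refl UNIV_not_empty] by blast
  have "T \<in> D"
    using is_sup_inD(2)[OF T] above unfolding D_def by blast
  then obtain p where p: "is_inf_in UNIV D p"
    using complete_sublattice_orderE[OF complete subset_UNIV, of D] by blast
  have least: "p \<le> u" if "a \<le> u" "k u \<le> u" for u
    using that is_inf_inD(2)[OF p] unfolding D_def by blast
  have a_le_p: "a \<le> p"
    using is_inf_inD(3)[OF p UNIV_I] unfolding D_def by blast
  have "k p \<le> x" if "x \<in> D" for x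
  proof -
    have "a \<le> x" "k x \<le> x" "p \<le> x"
      using that is_inf_inD(2)[OF p] unfolding D_def by auto
    then have "k p \<le> k x"
      using mono_onD[OF mono, of p x] a_le_p by simp
    with \<open>k x \<le> x\<close> show ?thesis by simp
  qed
  then have kp_le_p: "k p \<le> p"
    using is_inf_inD(3)[OF p UNIV_I] by blast
  then have "k (k p) \<le> k p"
    using mono_onD[OF mono, of "k p" p] a_le_p above[OF a_le_p] by simp
  then have "p \<le> k p"
    using least above[OF a_le_p] by blast
  with kp_le_p have "k p = p" by simp
  with a_le_p least show thesis
    using that by blast
qed

lemma fixpoint_le_inf_in_value:
  fixes F :: "'a::lattice \<Rightarrow> 'a set"
  assumes up: "upper_V_ascending F" and "s \<in> F s" "s \<le> x"
    and c: "is_inf_in (F x) B c" and s_lower: "\<And>y. y \<in> B \<Longrightarrow> s \<le> y"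
  shows "s \<le> c"
proof (cases "s = x")
  case True
  then show ?thesis
    using \<open>s \<in> F s\<close> s_lower by (blast intro: is_inf_inD(3)[OF c])
next
  case False
  with \<open>s \<le> x\<close> have "s < x" by simp
  then have "sup s c \<in> F x"
    using up \<open>s \<in> F s\<close> is_inf_inD(1)[OF c] unfolding upper_V_ascending_def by blast
  moreover have "sup s c \<le> y" if "y \<in> B" for y
    using that s_lower is_inf_inD(2)[OF c] by simp
  ultimately have "sup s c \<le> c"
    by (rule is_inf_inD(3)[OF c])
  then show ?thesis by simp
qed

lemma ex_least_in_value_above_sup:
  fixes F :: "'a::lattice \<Rightarrow> 'a set"
  assumes up: "upper_V_ascending F"
    and Fx: "F x \<noteq> {}" "complete_sublattice_order (F x)"
    and A: "A \<subseteq> Fix F" and a: "is_sup_in UNIV A a" and "a \<le> x"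
  shows "\<exists>c\<in>F x. a \<le> c \<and> (\<forall>y\<in>F x. a \<le> y \<longrightarrow> c \<le> y)"
proof -
  have sup_le_inf: "a \<le> c" if c: "is_inf_in (F x) B c" and B: "\<And>y. y \<in> B \<Longrightarrow> a \<le> y" for B c
  proof (rule is_sup_inD(3)[OF a UNIV_I])
    fix s assume "s \<in> A"
    then have "s \<le> a" "s \<in> F s"
      using is_sup_inD(2)[OF a] A unfolding Fix_def by auto
    show "s \<le> c"
    proof (rule fixpoint_le_inf_in_value[OF up \<open>s \<in> F s\<close> _ c])
      show "s \<le> x"
        using \<open>s \<le> a\<close> \<open>a \<le> x\<close> by (rule order_trans)
      show "s \<le> y" if "y \<in> B" for y
        using \<open>s \<le> a\<close> B[OF that] by (rule order_trans)
    qed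
  qed
  obtain t where "is_sup_in (F x) (F x) t"
    using complete_sublattice_orderE[OF Fx(2) order_refl Fx(1)] by blast
  then have t: "is_inf_in (F x) {} t"
    unfolding is_sup_in_def is_inf_in_def by blast
  then have "a \<le> t"
    by (rule sup_le_inf) simp
  with is_inf_inD(1)[OF t] have "t \<in> {y\<in>F x. a \<le> y}"
    by simp
  then obtain c where c: "is_inf_in (F x) {y\<in>F x. a \<le> y} c"
    using complete_sublattice_orderE[OF Fx(2), of "{y\<in>F x. a \<le> y}"] by blast
  then have "a \<le> c"
    by (rule sup_le_inf) simp
  with c show ?thesis
    unfolding is_inf_in_def by blast
qed

lemma least_in_value_above_mono:
  fixes F :: "'a::lattice \<Rightarrow> 'a set"
  assumes low: "lower_V_ascending F" and "x \<le> x'"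
    and c: "c \<in> F x" "a \<le> c" "\<forall>y\<in>F x. a \<le> y \<longrightarrow> c \<le> y"
    and c': "c' \<in> F x'" "a \<le> c'"
  shows "c \<le> c'"
proof (cases "x = x'")
  case True
  then show ?thesis using c c' by blast
next
  case False
  with \<open>x \<le> x'\<close> have "x < x'" by simp
  then have "inf c c' \<in> F x"
    using low c(1) c'(1) unfolding lower_V_ascending_def by blast
  moreover have "a \<le> inf c c'"
    using c(2) c'(2) by simp
  ultimately have "c \<le> inf c c'"
    using c(3) by blast
  then show ?thesis by simp
qed

lemma ex_sup_in_Fix:
  fixes F :: "'a::lattice \<Rightarrow> 'a set"
  assumes complete: "complete_sublattice_order (UNIV :: 'a set)"
    and V: "V_ascending F"
    and complete_values: "\<And>x. F x \<noteq> {} \<and> complete_sublattice_order (F x)"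
    and A: "A \<subseteq> Fix F" and a: "is_sup_in UNIV A a"
  shows "\<exists>p. is_sup_in (Fix F) A p"
proof -
  have up: "upper_V_ascending F" and low: "lower_V_ascending F"
    using V unfolding V_ascending_def by auto
  define k where "k x = (LEAST y. y \<in> F x \<and> a \<le> y)" for x
  have k: "k x \<in> F x" "a \<le> k x" "\<forall>y\<in>F x. a \<le> y \<longrightarrow> k x \<le> y" if ax: "a \<le> x" for x
  proof -
    obtain c where "c \<in> F x" "a \<le> c" "\<forall>y\<in>F x. a \<le> y \<longrightarrow> c \<le> y"
      using ex_least_in_value_above_sup[OF up _ _ A a ax] complete_values by blast
    then have "k x = c"
      unfolding k_def by (blast intro: Least_equality)
    with \<open>c \<in> F x\<close> \<open>a \<le> c\<close> \<open>\<forall>y\<in>F x. a \<le> y \<longrightarrow> c \<le> y\<close> show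
      "k x \<in> F x" "a \<le> k x" "\<forall>y\<in>F x. a \<le> y \<longrightarrow> k x \<le> y" by simp_all
  qed
  have "k x \<le> k x'" if "a \<le> x" "x \<le> x'" for x x'
    using least_in_value_above_mono[OF low \<open>x \<le> x'\<close> k[OF \<open>a \<le> x\<close>]] k(1,2)[of x'] that
    by (meson order_trans)
  then have "mono_on {a..} k"
    by (auto intro: mono_onI)
  then obtain p where p: "a \<le> p" "k p = p" "\<And>u. a \<le> u \<Longrightarrow> k u \<le> u \<Longrightarrow> p \<le> u"
    using least_fixpoint_above[OF complete] k by blast
  have "p \<in> Fix F"
    using k(1)[OF p(1)] p(2) unfolding Fix_def by simp
  moreover have "s \<le> p" if "s \<in> A" for s
    using is_sup_inD(2)[OF a that] p(1) by (rule order_trans)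
  moreover have "p \<le> u" if "u \<in> Fix F" "\<forall>s\<in>A. s \<le> u" for u
  proof -
    have "a \<le> u"
      using is_sup_inD(3)[OF a UNIV_I] that(2) by blast
    moreover have "k u \<le> u"
      using k(3)[OF \<open>a \<le> u\<close>] \<open>u \<in> Fix F\<close> \<open>a \<le> u\<close> unfolding Fix_def by simp
    ultimately show ?thesis by (rule p(3))
  qed
  ultimately show ?thesis
    unfolding is_sup_in_def by blast
qed

definition dual_correspondence :: "('a \<Rightarrow> 'a set) \<Rightarrow> 'a dual \<Rightarrow> 'a dual set" where
  "dual_correspondence F x = dual ` F (undual x)"

lemma upper_V_ascending_dual_correspondence:
  fixes F :: "'a::lattice \<Rightarrow> 'a set"
  assumes "lower_V_ascending F"
  shows "upper_V_ascending (dual_correspondence F)"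
  unfolding upper_V_ascending_def
proof (intro allI impI)
  fix x x' y y'
  assume "x < x'" "y \<in> dual_correspondence F x" "y' \<in> dual_correspondence F x'"
  then obtain u u' where "y = dual u" "u \<in> F (undual x)" "y' = dual u'" "u' \<in> F (undual x')"
    unfolding dual_correspondence_def by blast
  moreover have "undual x' < undual x"
    using \<open>x < x'\<close> by (simp add: dual_less_iff)
  ultimately have "inf u' u \<in> F (undual x')"
    using assms unfolding lower_V_ascending_def by blast
  moreover have "sup y y' = dual (inf u' u)"
    using \<open>y = dual u\<close> \<open>y' = dual u'\<close> by (simp add: sup_commute)
  ultimately show "sup y y' \<in> dual_correspondence F x'"
    unfolding dual_correspondence_def by blast
qed

lemma lower_V_ascending_dual_correspondence:
  fixes F :: "'a::lattice \<Rightarrow> 'a set"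
  assumes "upper_V_ascending F"
  shows "lower_V_ascending (dual_correspondence F)"
  unfolding lower_V_ascending_def
proof (intro allI impI)
  fix x x' y y'
  assume "x < x'" "y \<in> dual_correspondence F x" "y' \<in> dual_correspondence F x'"
  then obtain u u' where "y = dual u" "u \<in> F (undual x)" "y' = dual u'" "u' \<in> F (undual x')"
    unfolding dual_correspondence_def by blast
  moreover have "undual x' < undual x"
    using \<open>x < x'\<close> by (simp add: dual_less_iff)
  ultimately have "sup u' u \<in> F (undual x)"
    using assms unfolding upper_V_ascending_def by blast
  moreover have "inf y y' = dual (sup u' u)"
    using \<open>y = dual u\<close> \<open>y' = dual u'\<close> by (simp add: inf_commute)
  ultimately show "inf y y' \<in> dual_correspondence F x"
    unfolding dual_correspondence_def by blast
qed

lemma is_sup_in_dual_iff: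
  "is_sup_in (dual ` P) (dual ` A) (dual s) \<longleftrightarrow> is_inf_in P A s"
  unfolding is_sup_in_def is_inf_in_def by auto

lemma is_inf_in_dual_iff:
  "is_inf_in (dual ` P) (dual ` A) (dual s) \<longleftrightarrow> is_sup_in P A s"
  unfolding is_sup_in_def is_inf_in_def by auto

lemma complete_sublattice_order_dual:
  assumes "complete_sublattice_order P"
  shows "complete_sublattice_order (dual ` P)"
  unfolding complete_sublattice_order_def
proof (intro allI impI conjI)
  fix B assume "B \<subseteq> dual ` P \<and> B \<noteq> {}"
  then have "undual ` B \<subseteq> P" "undual ` B \<noteq> {}" by auto
  then obtain s i where "is_sup_in P (undual ` B) s" "is_inf_in P (undual ` B) i"
    using complete_sublattice_orderE[OF assms] by blast
  then have "is_inf_in (dual ` P) (dual ` undual ` B) (dual s)"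
    "is_sup_in (dual ` P) (dual ` undual ` B) (dual i)"
    by (simp_all add: is_sup_in_dual_iff is_inf_in_dual_iff)
  moreover have "dual ` undual ` B = B"
    by (simp add: image_image)
  ultimately show "\<exists>s. is_sup_in (dual ` P) B s" "\<exists>i. is_inf_in (dual ` P) B i"
    by auto
qed

lemma Fix_dual_correspondence: "Fix (dual_correspondence F) = dual ` Fix F"
  unfolding Fix_def dual_correspondence_def by (auto intro: image_eqI[of _ dual])

lemma ex_inf_in_Fix:
  fixes F :: "'a::lattice \<Rightarrow> 'a set"
  assumes complete: "complete_sublattice_order (UNIV :: 'a set)"
    and V: "V_ascending F"
    and complete_values: "\<And>x. F x \<noteq> {} \<and> complete_sublattice_order (F x)"
    and A: "A \<subseteq> Fix F" and a: "is_inf_in UNIV A a"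
  shows "\<exists>p. is_inf_in (Fix F) A p"
proof -
  have "\<exists>p. is_sup_in (Fix (dual_correspondence F)) (dual ` A) p"
  proof (rule ex_sup_in_Fix)
    show "complete_sublattice_order (UNIV :: 'a dual set)"
      using complete_sublattice_order_dual[OF complete] by (simp add: surj_dual)
    show "V_ascending (dual_correspondence F)"
      using V upper_V_ascending_dual_correspondence lower_V_ascending_dual_correspondence
      unfolding V_ascending_def by blast
    show "dual_correspondence F x \<noteq> {} \<and> complete_sublattice_order (dual_correspondence F x)"
      for x using complete_values complete_sublattice_order_dual
      unfolding dual_correspondence_def by blast
    show "dual ` A \<subseteq> Fix (dual_correspondence F)"
      using A unfolding Fix_dual_correspondence by blast
    show "is_sup_in UNIV (dual ` A) (dual a)"
      using a is_sup_in_dual_iff[of UNIV A a] by (simp add: surj_dual)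
  qed
  then obtain p where "is_sup_in (dual ` Fix F) (dual ` A) (dual p)"
    unfolding Fix_dual_correspondence by (metis dual_undual)
  then show ?thesis
    using is_sup_in_dual_iff by blast
qed

theorem theorem1p3:
  fixes F :: "'a::lattice \<Rightarrow> 'a set"
  assumes "complete_sublattice_order (UNIV :: 'a set)"
    and "V_ascending F"
    and "\<And>x. F x \<noteq> {} \<and> complete_sublattice_order (F x)"
  shows "Fix F \<noteq> {} \<and> complete_sublattice_order (Fix F)"
proof
  obtain b where "is_inf_in UNIV (UNIV :: 'a set) b"
    using complete_sublattice_orderE[OF assms(1) order_refl UNIV_not_empty] by blast
  then have "is_sup_in UNIV {} b"
    unfolding is_sup_in_def is_inf_in_def by auto
  then obtain p where "is_sup_in (Fix F) {} p"
    using ex_sup_in_Fix[OF assms] by blast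
  then show "Fix F \<noteq> {}"
    unfolding is_sup_in_def by auto
  show "complete_sublattice_order (Fix F)"
    unfolding complete_sublattice_order_def
  proof (intro allI impI conjI)
    fix A :: "'a set" assume A: "A \<subseteq> Fix F \<and> A \<noteq> {}"
    then obtain a a' where "is_sup_in UNIV A a" "is_inf_in UNIV A a'"
      using complete_sublattice_orderE[OF assms(1) subset_UNIV] by blast
    then show "\<exists>s. is_sup_in (Fix F) A s" "\<exists>i. is_inf_in (Fix F) A i"
      using ex_sup_in_Fix[OF assms] ex_inf_in_Fix[OF assms] A by blast+
  qed
qed

end
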